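(* Let $T\in\mathcal{BC}(X)$ and $s,p\in\rho_S(T)$ with $s\notin[p]$. Write $Q_s:=\mathcal Q_{c,s}(T)^{-1}$, $Q_p:=\mathcal Q_{c,p}(T)^{-1}$ and $s_0=\Re(s)$. Then $$sQ_sQ_pp-sQ_s\bar TQ_p-Q_s\bar TQ_pp+Q_s\bar T^2Q_p$$ $$=\big[(sQ_s-pQ_p)p-\bar s(sQ_s-pQ_p)\big](p^2-2s_0p+|s|^2)^{-1}+\big[(\bar TQ_p-Q_s\bar T)p-\bar s(\bar TQ_p-Q_s\bar T)\big](p^2-2s_0p+|s|^2)^{-1}.$$
   Context: $\mathbb H$ denotes the quaternions with units $e_1,e_2,e_3$; $\bar s$ is the conjugate of $s$; $[p]=\{\Re(p)+J|\underline p|:J\in\mathbb S\}$, $\mathbb S$ the unit purely imaginary quaternions. $X=X_{\mathbb R}\otimes\mathbb H$ is a two-sided quaternionic Banach module over a real Banach space $X_{\mathbb R}$; $\mathcal{BC}(X)$ is the set of $T=T_0+T_1e_1+T_2e_2+T_3e_3$ with $T_i\in\mathcal B(X_{\mathbb R})$ pairwise commuting; $\bar T=T_0-\sum_{i=1}^3T_ie_i$; $\mathcal Q_{c,s}(T)=s^2\mathcal I-s(T+\bar T)+T\bar T$; $\rho_S(T)$ is the set of $s\in\mathbb H$ for which $\mathcal Q_{c,s}(T)$ has a bounded inverse. *)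

theory Defs
  imports "HOL-Analysis.Analysis" "HOL-Library.Function_Algebras"
begin

datatype quat = Quat (qre: real) (qi1: real) (qi2: real) (qi3: real)

lemma quat_eq_iff: "a = b \<longleftrightarrow> qre a = qre b \<and> qi1 a = qi1 b \<and> qi2 a = qi2 b \<and> qi3 a = qi3 b"
  by (cases a; cases b) auto

instantiation quat :: ring_1
begin
definition "0 = Quat 0 0 0 0"
definition "1 = Quat 1 0 0 0"
definition "a + b = Quat (qre a + qre b) (qi1 a + qi1 b) (qi2 a + qi2 b) (qi3 a + qi3 b)"
definition "a - b = Quat (qre a - qre b) (qi1 a - qi1 b) (qi2 a - qi2 b) (qi3 a - qi3 b)"
definition "- a = Quat (- qre a) (- qi1 a) (- qi2 a) (- qi3 a)"
definition "a * b = Quat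
   (qre a * qre b - qi1 a * qi1 b - qi2 a * qi2 b - qi3 a * qi3 b)
   (qre a * qi1 b + qi1 a * qre b + qi2 a * qi3 b - qi3 a * qi2 b)
   (qre a * qi2 b - qi1 a * qi3 b + qi2 a * qre b + qi3 a * qi1 b)
   (qre a * qi3 b + qi1 a * qi2 b - qi2 a * qi1 b + qi3 a * qre b)"
instance
  by standard (auto simp: quat_eq_iff zero_quat_def one_quat_def plus_quat_def minus_quat_def
      uminus_quat_def times_quat_def algebra_simps)
end

instantiation quat :: real_vector
begin
definition "scaleR r a = Quat (r * qre a) (r * qi1 a) (r * qi2 a) (r * qi3 a)"
instance
  by standard (auto simp: quat_eq_iff scaleR_quat_def zero_quat_def plus_quat_def minus_quat_def
      uminus_quat_def algebra_simps)
end

instance quat :: real_algebra_1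
  by standard (auto simp: quat_eq_iff scaleR_quat_def times_quat_def one_quat_def algebra_simps)

definition qcnj :: "quat \<Rightarrow> quat" where
  "qcnj a = Quat (qre a) (- qi1 a) (- qi2 a) (- qi3 a)"

definition qabs :: "quat \<Rightarrow> real" where
  "qabs a = sqrt ((qre a)\<^sup>2 + (qi1 a)\<^sup>2 + (qi2 a)\<^sup>2 + (qi3 a)\<^sup>2)"

definition qimabs :: "quat \<Rightarrow> real" where
  "qimabs a = sqrt ((qi1 a)\<^sup>2 + (qi2 a)\<^sup>2 + (qi3 a)\<^sup>2)"

instantiation quat :: inverse
begin
definition "inverse a = scaleR (inverse ((qabs a)\<^sup>2)) (qcnj a)"
definition "a div b = a * inverse (b::quat)"
instance ..
end

definition qS :: "quat set" where
  "qS = {J. qre J = 0 \<and> qabs J = 1}"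

definition qsphere :: "quat \<Rightarrow> quat set" where
  "qsphere p = {of_real (qre p) + of_real (qimabs p) * J | J. J \<in> qS}"

text \<open>An element x = x0 + x1 e1 + x2 e2 + x3 e3 of X = X_R \<otimes> H is represented
  by its four components in X_R.\<close>

type_synonym 'a qvec = "'a \<times> 'a \<times> 'a \<times> 'a"

definition lmul :: "quat \<Rightarrow> 'a::real_vector qvec \<Rightarrow> 'a qvec" where
  "lmul a = (\<lambda>(x0, x1, x2, x3).
     (qre a *\<^sub>R x0 - qi1 a *\<^sub>R x1 - qi2 a *\<^sub>R x2 - qi3 a *\<^sub>R x3,
      qre a *\<^sub>R x1 + qi1 a *\<^sub>R x0 + qi2 a *\<^sub>R x3 - qi3 a *\<^sub>R x2,
      qre a *\<^sub>R x2 - qi1 a *\<^sub>R x3 + qi2 a *\<^sub>R x0 + qi3 a *\<^sub>R x1,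
      qre a *\<^sub>R x3 + qi1 a *\<^sub>R x2 - qi2 a *\<^sub>R x1 + qi3 a *\<^sub>R x0))"

text \<open>The operator T = T0 + T1 e1 + T2 e2 + T3 e3 acting on X by
  T(sum_j x_j e_j) = sum_{i,j} T_i(x_j) e_i e_j.\<close>
definition qop :: "('a::real_normed_vector \<Rightarrow>\<^sub>L 'a) \<Rightarrow> ('a \<Rightarrow>\<^sub>L 'a) \<Rightarrow> ('a \<Rightarrow>\<^sub>L 'a) \<Rightarrow> ('a \<Rightarrow>\<^sub>L 'a)
    \<Rightarrow> 'a qvec \<Rightarrow> 'a qvec" where
  "qop T0 T1 T2 T3 = (\<lambda>(x0, x1, x2, x3).
     (T0 x0 - T1 x1 - T2 x2 - T3 x3,
      T0 x1 + T1 x0 + T2 x3 - T3 x2,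
      T0 x2 - T1 x3 + T2 x0 + T3 x1,
      T0 x3 + T1 x2 - T2 x1 + T3 x0))"

definition BC :: "('a::real_normed_vector \<Rightarrow>\<^sub>L 'a) \<Rightarrow> ('a \<Rightarrow>\<^sub>L 'a) \<Rightarrow> ('a \<Rightarrow>\<^sub>L 'a) \<Rightarrow> ('a \<Rightarrow>\<^sub>L 'a) \<Rightarrow> bool" where
  "BC T0 T1 T2 T3 \<longleftrightarrow> (\<forall>A\<in>{T0, T1, T2, T3}. \<forall>B\<in>{T0, T1, T2, T3}. A o\<^sub>L B = B o\<^sub>L A)"

text \<open>Q_{c,s}(T) = s^2 I - s (T + Tbar) + T Tbar, with Tbar = T0 - T1 e1 - T2 e2 - T3 e3.\<close>
definition Qcs :: "('a::real_normed_vector \<Rightarrow>\<^sub>L 'a) \<Rightarrow> ('a \<Rightarrow>\<^sub>L 'a) \<Rightarrow> ('a \<Rightarrow>\<^sub>L 'a) \<Rightarrow> ('a \<Rightarrow>\<^sub>L 'a)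
    \<Rightarrow> quat \<Rightarrow> 'a qvec \<Rightarrow> 'a qvec" where
  "Qcs T0 T1 T2 T3 s =
     lmul (s * s) - (lmul s \<circ> (qop T0 T1 T2 T3 + qop T0 (- T1) (- T2) (- T3)))
     + (qop T0 T1 T2 T3 \<circ> qop T0 (- T1) (- T2) (- T3))"

definition rhoS :: "('a::real_normed_vector \<Rightarrow>\<^sub>L 'a) \<Rightarrow> ('a \<Rightarrow>\<^sub>L 'a) \<Rightarrow> ('a \<Rightarrow>\<^sub>L 'a) \<Rightarrow> ('a \<Rightarrow>\<^sub>L 'a)
    \<Rightarrow> quat set" where
  "rhoS T0 T1 T2 T3 = {s. \<exists>B. bounded_linear B \<and> B \<circ> Qcs T0 T1 T2 T3 s = id
                                               \<and> Qcs T0 T1 T2 T3 s \<circ> B = id}"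

end

theory Submission
  imports Defs
begin

text \<open>Work in the ring of linear endomorphisms of \<open>X\<close>; write \<open>S\<close>, \<open>P\<close>, \<open>S'\<close> for left
  multiplication by \<open>s\<close>, \<open>p\<close>, \<open>s\<close>-bar and \<open>T'\<close> for \<open>T\<close>-bar. Since \<open>S\<close> and \<open>P\<close> commute with
  the real operators \<open>T + T'\<close> and \<open>T T'\<close>, \<open>S\<close> commutes with \<open>Q\<^sub>s\<close> and \<open>P\<close> with \<open>Q\<^sub>p\<close>, so
  \<open>F = S Q\<^sub>s - Q\<^sub>s T'\<close> and \<open>G = Q\<^sub>p P - T' Q\<^sub>p\<close> solve the Sylvester equations
  \<open>S F - F T = 1\<close> and \<open>G P - T G = 1\<close>. The left-hand side is \<open>F G\<close>, and the two equations
  give \<open>F G P - S F G = F - G\<close>. Applying \<open>X \<mapsto> X P - S' X\<close> and using that \<open>S' + S = 2 s\<^sub>0\<close>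
  and \<open>S' S = |s|\<^sup>2\<close> are real scalars yields \<open>(F - G) P - S' (F - G) = F G (P\<^sup>2 - 2 s\<^sub>0 P + |s|\<^sup>2)\<close>.
  The last factor is left multiplication by \<open>p\<^sup>2 - 2 s\<^sub>0 p + |s|\<^sup>2\<close>, which is nonzero because
  \<open>s \<notin> [p]\<close>, and \<open>F - G\<close> splits into the two brackets of the right-hand side.\<close>

lemma commute_with_inverse:
  fixes a k q :: "'r::{ring, monoid_mult}"
  assumes "a * k = k * a" and "q * k = 1" and "k * q = 1"
  shows "a * q = q * a"
proof -
  have "q * a = q * (a * k) * q"
    using assms(3) by (simp add: mult.assoc)
  also have "\<dots> = a * q"
    using assms(1,2) by (metis mult.assoc mult_1_left)
  finally show ?thesis ..
qed

lemma commute_quadratic: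
  fixes a x y :: "'r::{ring, monoid_mult}"
  assumes "a * x = x * a" and "a * y = y * a"
  shows "a * (a * a - a * x + y) = (a * a - a * x + y) * a"
  using assms by (simp add: algebra_simps flip: mult.assoc)

lemma sylvester_left_solution:
  fixes S T t q :: "'r::{ring, monoid_mult}"
  assumes "q * (S * S - S * (T + t) + T * t) = 1" and "S * q = q * S" and "T * t = t * T"
  shows "S * (S * q - q * t) - (S * q - q * t) * T = 1"
proof -
  have "S * (S * q - q * t) - (S * q - q * t) * T = q * (S * S - S * (T + t) + T * t)"
    using assms(2,3) by (simp add: algebra_simps flip: mult.assoc)
  with assms(1) show ?thesis by simp
qed

lemma sylvester_right_solution:
  fixes P T t q :: "'r::{ring, monoid_mult}"
  assumes "(P * P - P * (T + t) + T * t) * q = 1" and "P * q = q * P"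
    and "P * (T + t) = (T + t) * P"
  shows "(q * P - t * q) * P - T * (q * P - t * q) = 1"
proof -
  have qPP: "q * (P * P) = P * P * q"
    by (metis assms(2) mult.assoc)
  have "(q * P - t * q) * P - T * (q * P - t * q) = q * (P * P) - (T + t) * (q * P) + T * t * q"
    by (simp add: algebra_simps)
  also have "\<dots> = (P * P - (T + t) * P + T * t) * q"
    unfolding qPP assms(2)[symmetric] by (simp add: algebra_simps)
  also have "\<dots> = (P * P - P * (T + t) + T * t) * q"
    by (simp only: assms(3))
  finally show ?thesis
    using assms(1) by simp
qed

lemma sylvester_product:
  fixes S T P F G :: "'r::{ring, monoid_mult}"
  assumes "S * F - F * T = 1" and "G * P - T * G = 1"
  shows "F * G * P - S * (F * G) = F - G"
proof -
  have "S * (F * G) = G + F * T * G"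
    using assms(1) by (simp add: algebra_simps flip: mult.assoc)
  moreover have "F * G * P = F + F * T * G"
    using assms(2) by (simp add: algebra_simps mult.assoc)
  ultimately show ?thesis by simp
qed

lemma sylvester_quadratic:
  fixes S Sc P B D c n :: "'r::{ring, monoid_mult}"
  assumes "B * P - S * B = D" and "Sc + S = c" and "Sc * S = n"
    and "\<And>x. c * x = x * c" and "\<And>x. n * x = x * n"
  shows "D * P - Sc * D = B * (P * P - c * P + n)"
proof -
  have "D * P - Sc * D = B * P * P - (Sc + S) * B * P + (Sc * S) * B"
    unfolding assms(1)[symmetric] by (simp add: algebra_simps)
  also have "\<dots> = B * (P * P - c * P + n)"
    unfolding assms(2,3) by (simp add: assms(4,5)[of B] algebra_simps)
  finally show ?thesis .
qed

lemma resolvent_product_identity: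
  fixes S Sc P T t qs qp qi c n :: "'r::{ring, monoid_mult}"
  assumes qs: "qs * (S * S - S * (T + t) + T * t) = 1" "(S * S - S * (T + t) + T * t) * qs = 1"
    and qp: "qp * (P * P - P * (T + t) + T * t) = 1" "(P * P - P * (T + t) + T * t) * qp = 1"
    and S_commute: "S * (T + t) = (T + t) * S" "S * (T * t) = (T * t) * S"
    and P_commute: "P * (T + t) = (T + t) * P" "P * (T * t) = (T * t) * P"
    and T_commute: "T * t = t * T"
    and Sc: "Sc + S = c" "Sc * S = n"
    and central: "\<And>x. c * x = x * c" "\<And>x. n * x = x * n"
    and qi: "(P * P - c * P + n) * qi = 1"
  shows "S * qs * qp * P - S * qs * t * qp - qs * t * qp * P + qs * t * t * qp
     = ((S * qs - P * qp) * P - Sc * (S * qs - P * qp)) * qi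
       + ((t * qp - qs * t) * P - Sc * (t * qp - qs * t)) * qi"
proof -
  define F where "F = S * qs - qs * t"
  define G where "G = qp * P - t * qp"
  have Sqs: "S * qs = qs * S"
    using commute_with_inverse[OF commute_quadratic[OF S_commute] qs] .
  have Pqp: "P * qp = qp * P"
    using commute_with_inverse[OF commute_quadratic[OF P_commute] qp] .
  have "S * F - F * T = 1"
    unfolding F_def using sylvester_left_solution[OF qs(1) Sqs T_commute] .
  moreover have "G * P - T * G = 1"
    unfolding G_def using sylvester_right_solution[OF qp(2) Pqp P_commute(1)] .
  ultimately have "(F - G) * P - Sc * (F - G) = F * G * (P * P - c * P + n)"
    by (intro sylvester_quadratic[OF sylvester_product Sc central])
  then have "F * G = ((F - G) * P - Sc * (F - G)) * qi"
    using qi by (metis mult.assoc mult_1_right)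
  moreover have "F - G = (S * qs - P * qp) + (t * qp - qs * t)"
    unfolding F_def G_def Pqp by simp
  ultimately show ?thesis
    unfolding F_def G_def by (simp add: algebra_simps)
qed

text \<open>Functions under composition and pointwise addition are not a ring (left distributivity
  needs additivity), so we pass to the linear endomorphisms. They do not form a \<^class>\<open>ring_1\<close>,
  since \<open>0 = 1\<close> on the zero space.\<close>

typedef (overloaded) 'v linear_endo = "{f :: 'v::real_vector \<Rightarrow> 'v. linear f}"
  morphisms linear_endo_apply Linear_Endo
  using real_vector.linear_id by blast

setup_lifting type_definition_linear_endo

instantiation linear_endo :: (real_vector) "{ring, monoid_mult}"
begin

lift_definition zero_linear_endo :: "'a linear_endo" is 0
  by (simp add: zero_fun_def real_vector.linear_zero)

lift_definition one_linear_endo :: "'a linear_endo" is id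
  by (rule real_vector.linear_id)

lift_definition plus_linear_endo :: "'a linear_endo \<Rightarrow> 'a linear_endo \<Rightarrow> 'a linear_endo" is "(+)"
  by (simp add: plus_fun_def real_vector.linear_compose_add)

lift_definition minus_linear_endo :: "'a linear_endo \<Rightarrow> 'a linear_endo \<Rightarrow> 'a linear_endo" is "(-)"
  by (simp add: fun_diff_def real_vector.linear_compose_sub)

lift_definition uminus_linear_endo :: "'a linear_endo \<Rightarrow> 'a linear_endo" is uminus
  by (simp add: fun_Compl_def real_vector.linear_compose_neg)

lift_definition times_linear_endo :: "'a linear_endo \<Rightarrow> 'a linear_endo \<Rightarrow> 'a linear_endo" is "(\<circ>)"
  by (rule linear_compose)

instance
  by standard (transfer; auto simp: fun_eq_iff linear_add linear_diff linear_0)+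

end

lemma linear_endo_apply_Linear_Endo [simp]: "linear f \<Longrightarrow> linear_endo_apply (Linear_Endo f) = f"
  by (simp add: Linear_Endo_inverse)

lemma linear_linear_endo_apply [simp]: "linear (linear_endo_apply a)"
  using linear_endo_apply by blast

lemma linear_endo_eq_iff: "a = b \<longleftrightarrow> linear_endo_apply a = linear_endo_apply b"
  by (simp add: linear_endo_apply_inject)

lemma scaleR_comp_linear: "linear f \<Longrightarrow> (*\<^sub>R) r \<circ> f = f \<circ> (*\<^sub>R) r"
  by (simp add: fun_eq_iff linear_scale)

lemmas linear_endo_apply_simps =
  zero_linear_endo.rep_eq one_linear_endo.rep_eq plus_linear_endo.rep_eq
  minus_linear_endo.rep_eq times_linear_endo.rep_eq

lemma of_real_quat: "(of_real r :: quat) = Quat r 0 0 0"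
  by (simp add: of_real_def scaleR_quat_def one_quat_def)

lemma linear_lmul [simp]: "linear (lmul q)"
  unfolding linear_iff by (auto simp: lmul_def split_beta algebra_simps)

lemma linear_qop [simp]: "linear (qop A B C D)"
  unfolding linear_iff
  by (auto simp: qop_def split_beta algebra_simps blinfun.add_right blinfun.diff_right blinfun.scaleR_right)

lemma lmul_mult: "lmul (a * b) = lmul a \<circ> lmul b"
  by (rule ext) (auto simp: lmul_def times_quat_def split_beta algebra_simps)

lemma lmul_add: "lmul (a + b) = lmul a + lmul b"
  by (rule ext) (auto simp: lmul_def plus_quat_def split_beta algebra_simps)

lemma lmul_diff: "lmul (a - b) = lmul a - lmul b"
  by (rule ext) (auto simp: lmul_def minus_quat_def split_beta algebra_simps)

lemma lmul_of_real: "lmul (of_real r) = (*\<^sub>R) r"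
  by (rule ext) (auto simp: lmul_def of_real_quat split_beta)

lemma lmul_one: "lmul 1 = id"
  by (rule ext) (simp add: lmul_def one_quat_def split_beta)

lemma qcnj_add_self: "qcnj s + s = of_real (2 * qre s)"
  by (simp add: quat_eq_iff qcnj_def plus_quat_def of_real_quat)

lemma qcnj_mult_self: "qcnj s * s = of_real ((qabs s)\<^sup>2)"
  by (simp add: quat_eq_iff qcnj_def times_quat_def of_real_quat qabs_def power2_eq_square algebra_simps)

lemma mult_qcnj_self: "s * qcnj s = of_real ((qabs s)\<^sup>2)"
  by (simp add: quat_eq_iff qcnj_def times_quat_def of_real_quat qabs_def power2_eq_square algebra_simps)

lemma qabs_eq_0_iff: "qabs q = 0 \<longleftrightarrow> q = 0"
  by (simp add: qabs_def quat_eq_iff zero_quat_def add_nonneg_eq_0_iff)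

lemma quat_right_inverse:
  assumes "q \<noteq> 0"
  shows "q * inverse q = (1::quat)"
proof -
  have "q * inverse q = inverse ((qabs q)\<^sup>2) *\<^sub>R (q * qcnj q)"
    by (simp add: inverse_quat_def)
  also have "\<dots> = (inverse ((qabs q)\<^sup>2) * (qabs q)\<^sup>2) *\<^sub>R 1"
    by (simp add: mult_qcnj_self of_real_def del: of_real_power)
  finally show ?thesis
    using assms by (simp add: qabs_eq_0_iff)
qed

lemma lmul_comp_real_qop: "lmul q \<circ> qop A 0 0 0 = qop A 0 0 0 \<circ> lmul q"
  by (rule ext) (auto simp: lmul_def qop_def split_beta blinfun.add_right blinfun.diff_right blinfun.scaleR_right)

lemma qop_add_qop_conj: "qop T0 T1 T2 T3 + qop T0 (- T1) (- T2) (- T3) = qop (T0 + T0) 0 0 0"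
  by (rule ext) (auto simp: qop_def split_beta blinfun.add_left uminus_blinfun.rep_eq)

lemma BC_commute:
  assumes "BC T0 T1 T2 T3" and "A \<in> {T0, T1, T2, T3}" and "B \<in> {T0, T1, T2, T3}"
  shows "A (B x) = B (A x)"
  using assms unfolding BC_def by (metis blinfun_apply_blinfun_compose)

lemma qop_comp_qop_conj:
  assumes "BC T0 T1 T2 T3"
  shows "qop T0 T1 T2 T3 \<circ> qop T0 (- T1) (- T2) (- T3)
           = qop ((T0 o\<^sub>L T0) + (T1 o\<^sub>L T1) + (T2 o\<^sub>L T2) + (T3 o\<^sub>L T3)) 0 0 0"
    and "qop T0 (- T1) (- T2) (- T3) \<circ> qop T0 T1 T2 T3
           = qop ((T0 o\<^sub>L T0) + (T1 o\<^sub>L T1) + (T2 o\<^sub>L T2) + (T3 o\<^sub>L T3)) 0 0 0"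
  using BC_commute[OF assms, of T0 T1] BC_commute[OF assms, of T0 T2] BC_commute[OF assms, of T0 T3]
    BC_commute[OF assms, of T1 T2] BC_commute[OF assms, of T1 T3] BC_commute[OF assms, of T2 T3]
  by (auto simp: fun_eq_iff qop_def blinfun.add_left uminus_blinfun.rep_eq blinfun.minus_left
      blinfun.add_right blinfun.diff_right blinfun.minus_right algebra_simps)

lemma rhoS_inverse:
  assumes "s \<in> rhoS T0 T1 T2 T3"
  defines "Q \<equiv> Qcs T0 T1 T2 T3 s"
  shows "linear (inv Q)" and "inv Q \<circ> Q = id" and "Q \<circ> inv Q = id"
proof -
  from assms obtain B where "bounded_linear B" "B \<circ> Q = id" "Q \<circ> B = id"
    unfolding rhoS_def by blast
  moreover from this have "inv Q = B"
    by (metis inv_unique_comp)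
  ultimately show "linear (inv Q)" "inv Q \<circ> Q = id" "Q \<circ> inv Q = id"
    by (simp_all add: bounded_linear.linear)
qed

lemma mem_qsphereI:
  assumes "qre s = qre p" and "qimabs s = qimabs p"
  shows "s \<in> qsphere p"
proof (cases "qimabs s = 0")
  case True
  then have "s = of_real (qre p) + of_real (qimabs p) * Quat 0 1 0 0"
    using assms
    by (simp add: qimabs_def quat_eq_iff of_real_quat times_quat_def plus_quat_def add_nonneg_eq_0_iff)
  moreover have "Quat 0 1 0 0 \<in> qS"
    by (simp add: qS_def qabs_def)
  ultimately show ?thesis
    unfolding qsphere_def by blast
next
  case False
  define r where "r = qimabs s"
  define J where "J = Quat 0 (qi1 s / r) (qi2 s / r) (qi3 s / r)"
  have r2: "r\<^sup>2 = (qi1 s)\<^sup>2 + (qi2 s)\<^sup>2 + (qi3 s)\<^sup>2"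
    unfolding r_def qimabs_def by simp
  have "(qabs J)\<^sup>2 = ((qi1 s)\<^sup>2 + (qi2 s)\<^sup>2 + (qi3 s)\<^sup>2) / r\<^sup>2"
    unfolding J_def qabs_def by (simp add: power_divide add_divide_distrib)
  with False have "qabs J = 1"
    unfolding r2[symmetric] r_def by (simp add: qabs_def)
  then have "J \<in> qS"
    by (simp add: qS_def J_def)
  moreover have "s = of_real (qre p) + of_real (qimabs p) * J"
    using False assms unfolding J_def r_def[symmetric]
    by (simp add: quat_eq_iff of_real_quat times_quat_def plus_quat_def)
  ultimately show ?thesis
    unfolding qsphere_def by blast
qed

lemma mem_qsphere_if_char_poly_root:
  assumes "p * p - of_real (2 * qre s) * p + of_real ((qabs s)\<^sup>2) = 0"
  shows "s \<in> qsphere p"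
proof -
  obtain a b c d where p: "p = Quat a b c d" by (cases p)
  obtain x y z w where s: "s = Quat x y z w" by (cases s)
  from assms have re: "(a - x)\<^sup>2 + (y\<^sup>2 + z\<^sup>2 + w\<^sup>2) = b\<^sup>2 + c\<^sup>2 + d\<^sup>2"
    and im: "(a - x) * b = 0" "(a - x) * c = 0" "(a - x) * d = 0"
    unfolding p s
    by (simp_all add: quat_eq_iff times_quat_def of_real_quat minus_quat_def plus_quat_def
        zero_quat_def qabs_def power2_eq_square algebra_simps)
  have "a = x"
  proof (rule ccontr)
    assume "a \<noteq> x"
    with im have "b\<^sup>2 + c\<^sup>2 + d\<^sup>2 = 0" by simp
    with re have "(a - x)\<^sup>2 = 0" by (smt (verit) zero_le_power2)
    with \<open>a \<noteq> x\<close> show False by simp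
  qed
  with re have "qimabs s = qimabs p"
    unfolding p s qimabs_def by simp
  with \<open>a = x\<close> show ?thesis
    unfolding p s by (intro mem_qsphereI) simp_all
qed

lemma Qcs_inverse_product_identity:
  fixes T0 T1 T2 T3 :: "'a::real_normed_vector \<Rightarrow>\<^sub>L 'a" and s p :: quat
    and Qs Qp :: "'a qvec \<Rightarrow> 'a qvec"
  assumes BC: "BC T0 T1 T2 T3"
    and Qs: "linear Qs" "Qs \<circ> Qcs T0 T1 T2 T3 s = id" "Qcs T0 T1 T2 T3 s \<circ> Qs = id"
    and Qp: "linear Qp" "Qp \<circ> Qcs T0 T1 T2 T3 p = id" "Qcs T0 T1 T2 T3 p \<circ> Qp = id"
    and q: "p * p - of_real (2 * qre s) * p + of_real ((qabs s)\<^sup>2) \<noteq> 0"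
  defines "Tb \<equiv> qop T0 (- T1) (- T2) (- T3)"
  shows "(lmul s \<circ> Qs \<circ> Qp \<circ> lmul p) - (lmul s \<circ> Qs \<circ> Tb \<circ> Qp) - (Qs \<circ> Tb \<circ> Qp \<circ> lmul p)
           + (Qs \<circ> Tb \<circ> Tb \<circ> Qp)
       = (((((lmul s \<circ> Qs) - (lmul p \<circ> Qp)) \<circ> lmul p) - (lmul (qcnj s) \<circ> ((lmul s \<circ> Qs) - (lmul p \<circ> Qp))))
           \<circ> lmul (inverse (p * p - of_real (2 * qre s) * p + of_real ((qabs s)\<^sup>2))))
         + (((((Tb \<circ> Qp) - (Qs \<circ> Tb)) \<circ> lmul p) - (lmul (qcnj s) \<circ> ((Tb \<circ> Qp) - (Qs \<circ> Tb))))
           \<circ> lmul (inverse (p * p - of_real (2 * qre s) * p + of_real ((qabs s)\<^sup>2))))"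
proof -
  let ?E = "Linear_Endo :: ('a qvec \<Rightarrow> 'a qvec) \<Rightarrow> _"
  let ?q = "p * p - of_real (2 * qre s) * p + of_real ((qabs s)\<^sup>2)"
  let ?S = "?E (lmul s)" and ?P = "?E (lmul p)" and ?Sc = "?E (lmul (qcnj s))"
  let ?t = "?E Tb" and ?Qs = "?E Qs" and ?Qp = "?E Qp" and ?Qi = "?E (lmul (inverse ?q))"
  have lmul_q: "lmul ?q = (lmul p \<circ> lmul p) - ((*\<^sub>R) (2 * qre s) \<circ> lmul p) + (*\<^sub>R) ((qabs s)\<^sup>2)"
    unfolding lmul_add lmul_diff lmul_mult lmul_of_real ..
  have qi: "lmul ?q \<circ> lmul (inverse ?q) = id"
    unfolding lmul_mult[symmetric] quat_right_inverse[OF q] by (rule lmul_one)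
  have Sc: "lmul (qcnj s) + lmul s = (*\<^sub>R) (2 * qre s)" "lmul (qcnj s) \<circ> lmul s = (*\<^sub>R) ((qabs s)\<^sup>2)"
    by (simp_all only: qcnj_add_self qcnj_mult_self lmul_of_real flip: lmul_add lmul_mult)
  have "?S * ?Qs * ?Qp * ?P - ?S * ?Qs * ?t * ?Qp - ?Qs * ?t * ?Qp * ?P + ?Qs * ?t * ?t * ?Qp
     = ((?S * ?Qs - ?P * ?Qp) * ?P - ?Sc * (?S * ?Qs - ?P * ?Qp)) * ?Qi
       + ((?t * ?Qp - ?Qs * ?t) * ?P - ?Sc * (?t * ?Qp - ?Qs * ?t)) * ?Qi"
    by (rule resolvent_product_identity[where T = "?E (qop T0 T1 T2 T3)"
          and c = "?E ((*\<^sub>R) (2 * qre s))" and n = "?E ((*\<^sub>R) ((qabs s)\<^sup>2))"])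
      (use Qs Qp Sc qi[unfolded lmul_q] in \<open>simp_all add: linear_endo_eq_iff linear_endo_apply_simps
        Qcs_def Tb_def lmul_mult qop_add_qop_conj qop_comp_qop_conj[OF BC] lmul_comp_real_qop
        scaleR_comp_linear\<close>)
  then show ?thesis
    by (simp add: linear_endo_eq_iff linear_endo_apply_simps Tb_def Qs(1) Qp(1))
qed

theorem theorem6p4:
  fixes T0 T1 T2 T3 :: "'a::banach \<Rightarrow>\<^sub>L 'a" and s p :: quat
  assumes "BC T0 T1 T2 T3"
    and "s \<in> rhoS T0 T1 T2 T3" and "p \<in> rhoS T0 T1 T2 T3"
    and "s \<notin> qsphere p"
  defines "Tb \<equiv> qop T0 (- T1) (- T2) (- T3)"
    and "Qs \<equiv> inv (Qcs T0 T1 T2 T3 s)"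
    and "Qp \<equiv> inv (Qcs T0 T1 T2 T3 p)"
    and "s0 \<equiv> qre s"
  shows "(lmul s \<circ> Qs \<circ> Qp \<circ> lmul p) - (lmul s \<circ> Qs \<circ> Tb \<circ> Qp) - (Qs \<circ> Tb \<circ> Qp \<circ> lmul p)
           + (Qs \<circ> Tb \<circ> Tb \<circ> Qp)
       = (((((lmul s \<circ> Qs) - (lmul p \<circ> Qp)) \<circ> lmul p) - (lmul (qcnj s) \<circ> ((lmul s \<circ> Qs) - (lmul p \<circ> Qp))))
           \<circ> lmul (inverse (p * p - of_real (2 * s0) * p + of_real ((qabs s)\<^sup>2))))
         + (((((Tb \<circ> Qp) - (Qs \<circ> Tb)) \<circ> lmul p) - (lmul (qcnj s) \<circ> ((Tb \<circ> Qp) - (Qs \<circ> Tb))))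
           \<circ> lmul (inverse (p * p - of_real (2 * s0) * p + of_real ((qabs s)\<^sup>2))))"
proof -
  have "p * p - of_real (2 * s0) * p + of_real ((qabs s)\<^sup>2) \<noteq> 0"
    using assms(4) mem_qsphere_if_char_poly_root unfolding s0_def by blast
  then show ?thesis
    unfolding Tb_def Qs_def Qp_def s0_def
    by (rule Qcs_inverse_product_identity[OF assms(1) rhoS_inverse[OF assms(2)] rhoS_inverse[OF assms(3)]])
qed

end
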